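(* Let $n>1$ and let $\mathcal{P}$ be an LS-packing of $n$ unit diameter disks in $\mathbb{E}^2$ with $c(\mathcal{P})=\lfloor 2n-2\sqrt{n}\rfloor$ such that the contact graph $G_c(\mathcal{P})$ is $2$-connected. Let $v$ be the number of vertices of the simple closed polygon bounding the external face of $G_c(\mathcal{P})$. Then the two inequalities $$c(\mathcal{P})+1\leq(2n-4)-2\sqrt{n-v}\qquad\text{and}\qquad 2(c(\mathcal{P})+1)-3n+4\leq n-v$$ cannot hold simultaneously.
   Context: A packing of disks in $\mathbb{E}^2$ is a family of disks with pairwise disjoint interiors. A packing is totally separable (a TS-packing) if any two of its disks can be separated by a line disjoint from the interior of every disk of the packing; it is locally separable (an LS-packing) if each disk together with the disks of the packing tangent to it form a TS-packing. The contact number $c(\mathcal{P})$ is the number of unordered pairs of tangent disks. The contact graph $G_c(\mathcal{P})$ is embedded in $\mathbb{E}^2$ with vertices the centers of the disks and edges the unit-length segments joining centers of tangent disks. *)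

theory Defs
  imports "HOL-Analysis.Analysis"
begin

type_synonym pt = "real ^ 2"

text \<open>A packing of unit-diameter disks is represented by the finite set of centres;
  the disk with centre x is cball x (1/2), its interior is ball x (1/2).\<close>

definition disk_packing :: "pt set \<Rightarrow> bool" where
  "disk_packing C \<longleftrightarrow> finite C \<and>
     (\<forall>x\<in>C. \<forall>y\<in>C. x \<noteq> y \<longrightarrow> ball x (1/2) \<inter> ball y (1/2) = {})"

definition tangent :: "pt \<Rightarrow> pt \<Rightarrow> bool" where
  "tangent x y \<longleftrightarrow> x \<noteq> y \<and> dist x y = 1"

definition TS_packing :: "pt set \<Rightarrow> bool" where
  "TS_packing C \<longleftrightarrow> disk_packing C \<and>
     (\<forall>x\<in>C. \<forall>y\<in>C. x \<noteq> y \<longrightarrow>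
        (\<exists>a b. a \<noteq> 0 \<and>
           (\<forall>z\<in>C. {w. a \<bullet> w = b} \<inter> ball z (1/2) = {}) \<and>
           cball x (1/2) \<subseteq> {w. a \<bullet> w \<le> b} \<and>
           cball y (1/2) \<subseteq> {w. b \<le> a \<bullet> w}))"

definition LS_packing :: "pt set \<Rightarrow> bool" where
  "LS_packing C \<longleftrightarrow> disk_packing C \<and>
     (\<forall>x\<in>C. TS_packing ({x} \<union> {y\<in>C. tangent x y}))"

definition contact_number :: "pt set \<Rightarrow> nat" where
  "contact_number C = card {{x, y} | x y. x \<in> C \<and> y \<in> C \<and> tangent x y}"

definition graph_connected :: "'a set \<Rightarrow> ('a \<Rightarrow> 'a \<Rightarrow> bool) \<Rightarrow> bool" where
  "graph_connected V E \<longleftrightarrow>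
     (\<forall>x\<in>V. \<forall>y\<in>V. (\<lambda>a b. a \<in> V \<and> b \<in> V \<and> E a b)\<^sup>*\<^sup>* x y)"

definition two_connected :: "'a set \<Rightarrow> ('a \<Rightarrow> 'a \<Rightarrow> bool) \<Rightarrow> bool" where
  "two_connected V E \<longleftrightarrow> finite V \<and> card V \<ge> 3 \<and> graph_connected V E \<and>
     (\<forall>w\<in>V. graph_connected (V - {w}) E)"

definition contact_edges :: "pt set \<Rightarrow> pt set" where
  "contact_edges C = (\<Union>{closed_segment x y | x y. x \<in> C \<and> y \<in> C \<and> tangent x y})"

definition outer_face_vertices :: "pt set \<Rightarrow> nat" where
  "outer_face_vertices C = card {x \<in> C. x \<in> frontier (outside (contact_edges C))}"

end

theory Submission
  imports Defs
begin

(* Only the value of the contact number matters. Writing c for the contact number, the floor gives c + 1 > 2n - 2 sqrt n. The first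
  inequality then forces sqrt (n - v) < sqrt n - 2, while the second forces
  n - v > n - 4 sqrt n + 4 = (sqrt n - 2)^2, i.e. sqrt (n - v) > sqrt n - 2. *)

lemma not_both_contact_bounds:
  fixes c n m :: real
  assumes "n \<ge> 0" and "2 * n - 2 * sqrt n < c + 1"
  shows "\<not> (c + 1 \<le> (2 * n - 4) - 2 * sqrt m \<and> 2 * (c + 1) - 3 * n + 4 \<le> m)"
proof
  assume bounds: "c + 1 \<le> (2 * n - 4) - 2 * sqrt m \<and> 2 * (c + 1) - 3 * n + 4 \<le> m"
  have sqrt_n_sq: "(sqrt n)\<^sup>2 = n"
    using assms(1) by simp
  have "sqrt m < sqrt n - 2"
    using bounds assms(2) by linarith
  moreover have "(sqrt n - 2)\<^sup>2 < m"
    using bounds assms(2) sqrt_n_sq by (simp add: power2_diff)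
  then have "sqrt n - 2 < sqrt m"
    by (rule real_less_rsqrt)
  ultimately show False
    by linarith
qed

theorem proposition1:
  fixes C :: "pt set" and n v :: nat
  assumes "LS_packing C"
    and "card C = n" and "n > 1"
    and "real (contact_number C) = of_int \<lfloor>2 * real n - 2 * sqrt (real n)\<rfloor>"
    and "two_connected C tangent"
    and "v = outer_face_vertices C"
  shows "\<not> (real (contact_number C) + 1 \<le> (2 * real n - 4) - 2 * sqrt (real n - real v) \<and>
            2 * (real (contact_number C) + 1) - 3 * real n + 4 \<le> real n - real v)"
proof -
  have "2 * real n - 2 * sqrt (real n) < real (contact_number C) + 1"
    using assms(4) by linarith
  then show ?thesis
    by (rule not_both_contact_bounds[rotated]) simp
qed

end
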